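(* For $\eta>0$ and $x,y\in\mathbf{R}^3$ let $$\mathcal{R}_0(\eta;x,y)=\frac{1}{1+2\eta^2}\cdot\frac{e^{i\eta|x-y|}-e^{-i\eta|x-y|}}{4\pi|x-y|}.$$ Then for $t>1$, $$\sup_{x,y\in\mathbf{R}^3}\Big|\int_0^\infty e^{-it(\eta^4+\eta^2)}\mathcal{R}_0(\eta;x,y)(4\eta^3+2\eta)\,d\eta\Big|\lesssim |t|^{-3/2},$$ and for $0<t\le1$ the same supremum is $\lesssim|t|^{-3/4}$.
   Context: $\mathcal{R}_0(\eta;x,y)=R_0^+(\lambda;x,y)-R_0^-(\lambda;x,y)$ with $\lambda=\eta^4+\eta^2$, where $R_0^\pm(\lambda)=\lim_{\epsilon\downarrow0}(\Delta^2-\Delta-(\lambda\pm i\epsilon))^{-1}$ on $\mathbf{R}^3$ has kernel $R_0^\pm(\lambda;x,y)=\frac{1}{1+2\eta^2}\Big(\frac{e^{\pm i\eta|x-y|}}{4\pi|x-y|}-\frac{e^{-\sqrt{1+\eta^2}|x-y|}}{4\pi|x-y|}\Big)$, $\eta=(\sqrt{1/4+\lambda}-1/2)^{1/2}$. The integral over $(0,\infty)$ is understood as an (improper) oscillatory integral. *)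

theory Defs
  imports "HOL-Analysis.Analysis"
begin

text \<open>Kernel of the spectral difference R_0^+ - R_0^-, as a function of eta and r = |x - y|.
  At r = 0 it is given by its continuous extension (limit r -> 0).\<close>
definition calR0 :: "real \<Rightarrow> real \<Rightarrow> complex" where
  "calR0 \<eta> r = complex_of_real (1 / (1 + 2 * \<eta>\<^sup>2)) *
     (if r = 0 then 2 * \<i> * complex_of_real \<eta> / complex_of_real (4 * pi)
      else (exp (\<i> * complex_of_real (\<eta> * r)) - exp (- \<i> * complex_of_real (\<eta> * r)))
           / complex_of_real (4 * pi * r))"

definition osc_integrand :: "real \<Rightarrow> real \<Rightarrow> real \<Rightarrow> complex" where
  "osc_integrand t r \<eta> = exp (- \<i> * complex_of_real (t * (\<eta> ^ 4 + \<eta>\<^sup>2))) * calR0 \<eta> r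
     * complex_of_real (4 * \<eta> ^ 3 + 2 * \<eta>)"

end

theory Submission
  imports Defs "HOL-Real_Asymp.Real_Asymp"
begin

(* Since 4\<eta>^3 + 2\<eta> = 2\<eta> (1 + 2\<eta>^2), the integrand is (i/pi) e^{-it(\<eta>^4+\<eta>^2)} \<eta> sin(r\<eta>)/r
   with r = |x - y|, and one integration by parts in \<eta> trades the factor \<eta> for 1/t, leaving
   amplitudes of size (1 + 2\<eta>^2)^{-1}. Writing cos(r\<eta>) as a sum of two exponentials, the
   remaining integrals over [a, R] have phases t(\<eta>^4+\<eta>^2) + s\<eta> whose second derivative is at
   least 2t(1 + 2a^2), so van der Corput's second derivative test, combined with an integration by
   parts in the amplitude, bounds them uniformly in r and R. The piece over [0, a] is at most a^3.
   Choosing a = 0 gives the decay t^{-3/2}; for t \<le> 1, choosing a = t^{-1/4} gives t^{-3/4}. *)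

section \<open>Van der Corput's lemma\<close>

lemma has_vector_derivative_cis:
  assumes "(\<psi> has_real_derivative d) (at x within S)"
  shows "((\<lambda>x. cis (\<psi> x)) has_vector_derivative (\<i> * of_real d * cis (\<psi> x))) (at x within S)"
  using has_derivative_cis[OF assms[unfolded has_field_derivative_def]]
  by (simp add: has_vector_derivative_def scaleR_conv_of_real ac_simps)

lemma norm_integral_cis_le_length:
  assumes "c \<le> d" and "continuous_on {c..d} \<psi>"
  shows "norm (integral {c..d} (\<lambda>x. cis (\<psi> x))) \<le> d - c"
  using integral_bound[OF assms(1), of "\<lambda>x. cis (\<psi> x)" 1] assms
  by (auto intro: continuous_intros)

lemma increment_ge_if_derivative_ge:
  fixes f f' :: "real \<Rightarrow> real"
  assumes "c \<le> x" and f: "\<And>y. (f has_real_derivative f' y) (at y)"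
    and ge: "\<And>y. c \<le> y \<Longrightarrow> y \<le> x \<Longrightarrow> L \<le> f' y"
  shows "L * (x - c) \<le> f x - f c"
proof -
  have "f c - L * c \<le> f x - L * x"
  proof (rule DERIV_nonneg_imp_nondecreasing[OF assms(1), of "\<lambda>y. f y - L * y"])
    fix y assume "c \<le> y" "y \<le> x"
    then show "\<exists>z. ((\<lambda>y. f y - L * y) has_real_derivative z) (at y) \<and> z \<ge> 0"
      using ge[of y] by (intro exI[of _ "f' y - L"]) (auto intro!: derivative_eq_intros f)
  qed
  then show ?thesis by (simp add: algebra_simps)
qed

lemma van_der_corput_first_derivative:
  fixes \<psi> \<psi>' \<psi>'' :: "real \<Rightarrow> real"
  assumes "c \<le> d" and "\<mu> > 0"
    and \<psi>: "\<And>x. (\<psi> has_real_derivative \<psi>' x) (at x)"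
    and \<psi>': "\<And>x. (\<psi>' has_real_derivative \<psi>'' x) (at x)"
    and convex: "\<And>x. x \<in> {c..d} \<Longrightarrow> 0 \<le> \<psi>'' x"
    and steep: "\<And>x. x \<in> {c..d} \<Longrightarrow> \<mu> \<le> \<bar>\<psi>' x\<bar>"
  shows "norm (integral {c..d} (\<lambda>x. cis (\<psi> x))) \<le> 4 / \<mu>"
proof -
  have nz: "\<psi>' x \<noteq> 0" if "x \<in> {c..d}" for x
    using steep[OF that] \<open>\<mu> > 0\<close> by auto
  have inv_deriv: "((\<lambda>x. inverse (\<psi>' x)) has_real_derivative - (\<psi>'' x / \<psi>' x ^ 2)) (at x within {c..d})"
    if "x \<in> {c..d}" for x
    using has_field_derivative_at_within[OF DERIV_inverse_fun[OF \<psi>' nz[OF that]]]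
    by (simp add: power2_eq_square divide_inverse)
  \<comment> \<open>one integration by parts: \<open>cis \<psi> = P' - cis \<psi> * v\<close> with \<open>P = cis \<psi> / (\<i> \<psi>')\<close>\<close>
  define v where "v x = \<i> * of_real (\<psi>'' x / \<psi>' x ^ 2)" for x
  define P where "P x = cis (\<psi> x) * (- \<i> * of_real (inverse (\<psi>' x)))" for x
  have "(P has_vector_derivative cis (\<psi> x) + cis (\<psi> x) * v x) (at x within {c..d})"
    if x: "x \<in> {c..d}" for x
  proof -
    have "(P has_vector_derivative cis (\<psi> x) * (- \<i> * of_real (- (\<psi>'' x / \<psi>' x ^ 2)))
        + \<i> * of_real (\<psi>' x) * cis (\<psi> x) * (- \<i> * of_real (inverse (\<psi>' x)))) (at x within {c..d})"
      unfolding P_def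
      by (intro has_vector_derivative_mult has_vector_derivative_cis has_vector_derivative_mult_right
          has_vector_derivative_of_real has_field_derivative_at_within[OF \<psi>] inv_deriv x)
    then show ?thesis
      using nz[OF x] by (simp add: v_def field_simps)
  qed
  then have ftc: "((\<lambda>x. cis (\<psi> x) + cis (\<psi> x) * v x) has_integral P d - P c) {c..d}"
    by (rule fundamental_theorem_of_calculus[OF \<open>c \<le> d\<close>])
  have int_cis: "(\<lambda>x. cis (\<psi> x)) integrable_on {c..d}"
    by (intro integrable_continuous_interval continuous_intros
        DERIV_continuous_on[OF has_field_derivative_at_within[OF \<psi>]])
  have "(\<lambda>x. (cis (\<psi> x) + cis (\<psi> x) * v x) - cis (\<psi> x)) integrable_on {c..d}"
    using int_cis ftc by (intro integrable_diff) auto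
  then have int_v: "(\<lambda>x. cis (\<psi> x) * v x) integrable_on {c..d}"
    by simp
  have split: "integral {c..d} (\<lambda>x. cis (\<psi> x)) = (P d - P c) - integral {c..d} (\<lambda>x. cis (\<psi> x) * v x)"
    using integral_add[OF int_cis int_v] integral_unique[OF ftc] by (simp add: algebra_simps)
  have norm_P: "norm (P x) \<le> inverse \<mu>" if "x \<in> {c..d}" for x
  proof -
    have "norm (P x) = inverse \<bar>\<psi>' x\<bar>"
      by (simp add: P_def norm_mult norm_inverse)
    also have "\<dots> \<le> inverse \<mu>"
      using steep[OF that] \<open>\<mu> > 0\<close> by (intro le_imp_inverse_le)
    finally show ?thesis .
  qed
  have weight: "((\<lambda>x. \<psi>'' x / \<psi>' x ^ 2) has_integral inverse (\<psi>' c) - inverse (\<psi>' d)) {c..d}"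
    using fundamental_theorem_of_calculus[OF \<open>c \<le> d\<close>, of "\<lambda>x. - inverse (\<psi>' x)"]
      DERIV_minus[OF inv_deriv]
    by (simp add: has_real_derivative_iff_has_vector_derivative)
  have "norm (integral {c..d} (\<lambda>x. cis (\<psi> x) * v x)) \<le> integral {c..d} (\<lambda>x. \<psi>'' x / \<psi>' x ^ 2)"
    by (rule integral_norm_bound_integral[OF int_v])
      (use weight convex in \<open>auto simp: v_def norm_mult norm_divide norm_power\<close>)
  also have "\<dots> = inverse (\<psi>' c) - inverse (\<psi>' d)"
    using weight by (rule integral_unique)
  also have "\<dots> \<le> 2 * inverse \<mu>"
  proof -
    have "\<bar>inverse (\<psi>' x)\<bar> \<le> inverse \<mu>" if "x \<in> {c..d}" for x
      unfolding abs_inverse using steep[OF that] \<open>\<mu> > 0\<close> by (intro le_imp_inverse_le)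
    from this[of c] this[of d] show ?thesis
      using \<open>c \<le> d\<close> by (auto simp: abs_le_iff simp del: abs_inverse)
  qed
  finally have "norm (integral {c..d} (\<lambda>x. cis (\<psi> x) * v x)) \<le> 2 * inverse \<mu>" .
  moreover have "norm (P d - P c) \<le> 2 * inverse \<mu>"
    using norm_triangle_ineq4[of "P d" "P c"] norm_P[of c] norm_P[of d] \<open>c \<le> d\<close> by auto
  ultimately show ?thesis
    unfolding split divide_inverse by (intro norm_triangle_le_diff) linarith
qed

lemma van_der_corput_second_derivative_increasing:
  fixes \<psi> \<psi>' \<psi>'' :: "real \<Rightarrow> real"
  assumes "c \<le> d" and "L > 0"
    and \<psi>: "\<And>x. (\<psi> has_real_derivative \<psi>' x) (at x)"
    and \<psi>': "\<And>x. (\<psi>' has_real_derivative \<psi>'' x) (at x)"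
    and convex: "\<And>x. x \<in> {c..d} \<Longrightarrow> L \<le> \<psi>'' x"
    and start: "0 \<le> \<psi>' c"
  shows "norm (integral {c..d} (\<lambda>x. cis (\<psi> x))) \<le> 5 / sqrt L"
proof -
  define \<delta> where "\<delta> = 1 / sqrt L"
  have "\<delta> > 0" and L\<delta>: "L * \<delta> = sqrt L"
    using \<open>L > 0\<close> real_div_sqrt[of L] by (auto simp: \<delta>_def)
  have "\<delta> \<le> 5 / sqrt L"
    unfolding \<delta>_def using \<open>L > 0\<close> by (intro divide_right_mono) auto
  have cont: "continuous_on S \<psi>" for S
    using DERIV_continuous_on[OF has_field_derivative_at_within[OF \<psi>]] .
  show ?thesis
  proof (cases "d \<le> c + \<delta>")
    case True
    then show ?thesis
      using norm_integral_cis_le_length[OF \<open>c \<le> d\<close> cont] \<open>\<delta> \<le> 5 / sqrt L\<close> by linarith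
  next
    case False
    have "norm (integral {c+\<delta>..d} (\<lambda>x. cis (\<psi> x))) \<le> 4 / sqrt L"
    proof (rule van_der_corput_first_derivative[OF _ _ \<psi> \<psi>'])
      fix x assume x: "x \<in> {c+\<delta>..d}"
      then show "0 \<le> \<psi>'' x"
        using convex[of x] \<open>L > 0\<close> \<open>\<delta> > 0\<close> by auto
      have "L * (x - c) \<le> \<psi>' x - \<psi>' c"
        by (rule increment_ge_if_derivative_ge[OF _ \<psi>']) (use x \<open>\<delta> > 0\<close> convex in auto)
      moreover have "L * \<delta> \<le> L * (x - c)"
        using x \<open>L > 0\<close> by auto
      ultimately show "sqrt L \<le> \<bar>\<psi>' x\<bar>"
        using L\<delta> start by linarith
    qed (use False \<open>L > 0\<close> in auto)
    moreover have "norm (integral {c..c+\<delta>} (\<lambda>x. cis (\<psi> x))) \<le> \<delta>"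
      using norm_integral_cis_le_length[OF _ cont, of c "c + \<delta>"] \<open>\<delta> > 0\<close> by simp
    moreover have "integral {c..d} (\<lambda>x. cis (\<psi> x))
        = integral {c..c+\<delta>} (\<lambda>x. cis (\<psi> x)) + integral {c+\<delta>..d} (\<lambda>x. cis (\<psi> x))"
      using False \<open>\<delta> > 0\<close>
      by (intro Henstock_Kurzweil_Integration.integral_combine[symmetric]
          integrable_continuous_interval continuous_intros cont) auto
    ultimately have "norm (integral {c..d} (\<lambda>x. cis (\<psi> x))) \<le> \<delta> + 4 / sqrt L"
      by (metis add.commute add_mono norm_triangle_le)
    then show ?thesis
      by (simp add: \<delta>_def add_divide_distrib[symmetric])
  qed
qed

lemma van_der_corput_second_derivative_decreasing:
  fixes \<psi> \<psi>' \<psi>'' :: "real \<Rightarrow> real"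
  assumes "c \<le> d" and "L > 0"
    and \<psi>: "\<And>x. (\<psi> has_real_derivative \<psi>' x) (at x)"
    and \<psi>': "\<And>x. (\<psi>' has_real_derivative \<psi>'' x) (at x)"
    and convex: "\<And>x. x \<in> {c..d} \<Longrightarrow> L \<le> \<psi>'' x"
    and stop: "\<psi>' d \<le> 0"
  shows "norm (integral {c..d} (\<lambda>x. cis (\<psi> x))) \<le> 5 / sqrt L"
proof -
  have "norm (integral {-d..-c} (\<lambda>x. cis (\<psi> (- x)))) \<le> 5 / sqrt L"
  proof (rule van_der_corput_second_derivative_increasing[OF _ \<open>L > 0\<close>])
    show "((\<lambda>x. \<psi> (- x)) has_real_derivative - \<psi>' (- x)) (at x)" for x
      using DERIV_mirror \<psi> by blast
    show "((\<lambda>x. - \<psi>' (- x)) has_real_derivative \<psi>'' (- x)) (at x)" for x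
      using DERIV_minus[OF iffD1[OF DERIV_mirror \<psi>'[of "- x"]]] by simp
  qed (use \<open>c \<le> d\<close> convex stop in auto)
  then show ?thesis
    using Henstock_Kurzweil_Integration.integral_reflect_real[of d c "\<lambda>x. cis (\<psi> x)"] by simp
qed

lemma van_der_corput_second_derivative:
  fixes \<psi> \<psi>' \<psi>'' :: "real \<Rightarrow> real"
  assumes "a \<le> b" and "L > 0"
    and \<psi>: "\<And>x. (\<psi> has_real_derivative \<psi>' x) (at x)"
    and \<psi>': "\<And>x. (\<psi>' has_real_derivative \<psi>'' x) (at x)"
    and convex: "\<And>x. x \<in> {a..b} \<Longrightarrow> L \<le> \<psi>'' x"
  shows "norm (integral {a..b} (\<lambda>x. cis (\<psi> x))) \<le> 10 / sqrt L"
proof -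
  have cont: "continuous_on S \<psi>" "continuous_on S \<psi>'" for S
    using DERIV_continuous_on[OF has_field_derivative_at_within[OF \<psi>]]
      DERIV_continuous_on[OF has_field_derivative_at_within[OF \<psi>']] by auto
  have five_le_ten: "5 / sqrt L \<le> 10 / sqrt L"
    using \<open>L > 0\<close> by (simp add: divide_right_mono)
  consider "0 \<le> \<psi>' a" | "\<psi>' b \<le> 0" | m where "a \<le> m" "m \<le> b" "\<psi>' m = 0"
    using IVT'[of \<psi>' a 0 b, OF _ _ \<open>a \<le> b\<close> cont(2)] by force
  then show ?thesis
  proof cases
    case 1
    with van_der_corput_second_derivative_increasing[OF \<open>a \<le> b\<close> \<open>L > 0\<close> \<psi> \<psi>' convex]
    show ?thesis using five_le_ten by linarith
  next
    case 2
    with van_der_corput_second_derivative_decreasing[OF \<open>a \<le> b\<close> \<open>L > 0\<close> \<psi> \<psi>' convex]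
    show ?thesis using five_le_ten by linarith
  next
    case 3
    have "norm (integral {a..m} (\<lambda>x. cis (\<psi> x))) \<le> 5 / sqrt L"
      by (rule van_der_corput_second_derivative_decreasing[OF _ \<open>L > 0\<close> \<psi> \<psi>']) (use 3 convex in auto)
    moreover have "norm (integral {m..b} (\<lambda>x. cis (\<psi> x))) \<le> 5 / sqrt L"
      by (rule van_der_corput_second_derivative_increasing[OF _ \<open>L > 0\<close> \<psi> \<psi>']) (use 3 convex in auto)
    moreover have "integral {a..b} (\<lambda>x. cis (\<psi> x))
        = integral {a..m} (\<lambda>x. cis (\<psi> x)) + integral {m..b} (\<lambda>x. cis (\<psi> x))"
      using 3 by (intro Henstock_Kurzweil_Integration.integral_combine[symmetric]
          integrable_continuous_interval continuous_intros cont) auto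
    ultimately have "norm (integral {a..b} (\<lambda>x. cis (\<psi> x))) \<le> 5 / sqrt L + 5 / sqrt L"
      by (metis add_mono norm_triangle_le)
    then show ?thesis
      by (simp add: add_divide_distrib[symmetric])
  qed
qed

lemma norm_integral_mult_real_le:
  fixes F :: "real \<Rightarrow> complex" and h h' g :: "real \<Rightarrow> real"
  assumes "a \<le> b" and "continuous_on {a..b} F"
    and partial: "\<And>u. u \<in> {a..b} \<Longrightarrow> norm (integral {a..u} F) \<le> M"
    and h: "\<And>x. (h has_real_derivative h' x) (at x)"
    and h'_le: "\<And>x. x \<in> {a..b} \<Longrightarrow> \<bar>h' x\<bar> \<le> g x"
    and "g integrable_on {a..b}"
  shows "norm (integral {a..b} (\<lambda>x. F x * of_real (h x))) \<le> M * (\<bar>h b\<bar> + integral {a..b} g)"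
proof -
  define G where "G u = integral {a..u} F" for u
  have G': "(G has_vector_derivative F x) (at x within {a..b})" if "x \<in> {a..b}" for x
    unfolding G_def by (rule integral_has_vector_derivative[OF \<open>continuous_on {a..b} F\<close> that])
  have "((\<lambda>x. G x * of_real (h x)) has_vector_derivative G x * of_real (h' x) + F x * of_real (h x))
      (at x within {a..b})" if "x \<in> {a..b}" for x
    by (intro has_vector_derivative_mult G' that has_vector_derivative_of_real
        has_field_derivative_at_within[OF h])
  then have ftc: "((\<lambda>x. G x * of_real (h' x) + F x * of_real (h x)) has_integral G b * of_real (h b)) {a..b}"
    using fundamental_theorem_of_calculus[OF \<open>a \<le> b\<close>] by (force simp: G_def)
  have int_Fh: "(\<lambda>x. F x * of_real (h x)) integrable_on {a..b}"
    by (intro integrable_continuous_interval continuous_intros \<open>continuous_on {a..b} F\<close>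
        DERIV_continuous_on[OF has_field_derivative_at_within[OF h]])
  have "(\<lambda>x. (G x * of_real (h' x) + F x * of_real (h x)) - F x * of_real (h x)) integrable_on {a..b}"
    using ftc int_Fh by (intro integrable_diff) auto
  then have int_Gh': "(\<lambda>x. G x * of_real (h' x)) integrable_on {a..b}"
    by simp
  have split: "integral {a..b} (\<lambda>x. F x * of_real (h x)) = G b * of_real (h b) - integral {a..b} (\<lambda>x. G x * of_real (h' x))"
    using integral_add[OF int_Gh' int_Fh] integral_unique[OF ftc] by (simp add: algebra_simps)
  have "M \<ge> 0"
    using partial[of a] \<open>a \<le> b\<close> by (auto intro: order_trans[OF norm_ge_zero])
  have "norm (integral {a..b} (\<lambda>x. G x * of_real (h' x))) \<le> integral {a..b} (\<lambda>x. M * g x)"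
  proof (rule integral_norm_bound_integral[OF int_Gh'])
    show "(\<lambda>x. M * g x) integrable_on {a..b}"
      using \<open>g integrable_on {a..b}\<close> by (rule integrable_on_mult_right)
    show "norm (G x * of_real (h' x)) \<le> M * g x" if "x \<in> {a..b}" for x
      using partial[OF that] h'_le[OF that] \<open>M \<ge> 0\<close>
      by (auto simp: G_def norm_mult intro: mult_mono)
  qed
  moreover have "norm (G b * of_real (h b)) \<le> M * \<bar>h b\<bar>"
    using partial[of b] \<open>a \<le> b\<close> by (auto simp: G_def norm_mult intro: mult_right_mono)
  ultimately show ?thesis
    unfolding split by (intro norm_triangle_le_diff) (simp add: algebra_simps)
qed

lemma van_der_corput_second_derivative_amplitude:
  fixes \<psi> \<psi>' \<psi>'' h h' g :: "real \<Rightarrow> real"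
  assumes "a \<le> b" and "L > 0"
    and \<psi>: "\<And>x. (\<psi> has_real_derivative \<psi>' x) (at x)"
    and \<psi>': "\<And>x. (\<psi>' has_real_derivative \<psi>'' x) (at x)"
    and convex: "\<And>x. x \<in> {a..b} \<Longrightarrow> L \<le> \<psi>'' x"
    and h: "\<And>x. (h has_real_derivative h' x) (at x)"
    and h'_le: "\<And>x. x \<in> {a..b} \<Longrightarrow> \<bar>h' x\<bar> \<le> g x"
    and g: "g integrable_on {a..b}"
  shows "norm (integral {a..b} (\<lambda>x. cis (\<psi> x) * of_real (h x)))
    \<le> 10 / sqrt L * (\<bar>h b\<bar> + integral {a..b} g)"
proof (rule norm_integral_mult_real_le[OF \<open>a \<le> b\<close> _ _ h h'_le g])
  show "continuous_on {a..b} (\<lambda>x. cis (\<psi> x))"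
    by (intro continuous_intros DERIV_continuous_on[OF has_field_derivative_at_within[OF \<psi>]])
  show "norm (integral {a..u} (\<lambda>x. cis (\<psi> x))) \<le> 10 / sqrt L" if "u \<in> {a..b}" for u
    by (rule van_der_corput_second_derivative[OF _ \<open>L > 0\<close> \<psi> \<psi>']) (use that convex in auto)
qed

section \<open>Integration by parts in the spectral variable\<close>

definition sin_over :: "real \<Rightarrow> real \<Rightarrow> real" where
  "sin_over r \<eta> = (if r = 0 then \<eta> else sin (\<eta> * r) / r)"

definition denom :: "real \<Rightarrow> real" where
  "denom \<eta> = 1 + 2 * \<eta>\<^sup>2"

definition phase :: "real \<Rightarrow> real \<Rightarrow> real \<Rightarrow> real" where
  "phase t s \<eta> = t * (\<eta> ^ 4 + \<eta>\<^sup>2) + s * \<eta>"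

lemma sin_over_has_real_derivative: "(sin_over r has_real_derivative cos (\<eta> * r)) (at \<eta>)"
proof (cases "r = 0")
  case True
  then show ?thesis
    unfolding sin_over_def[abs_def] by (auto intro!: derivative_eq_intros)
next
  case False
  then have "sin_over r = (\<lambda>\<eta>. sin (\<eta> * r) / r)"
    unfolding sin_over_def[abs_def] by simp
  then show ?thesis
    using False by (auto intro!: derivative_eq_intros)
qed

lemma continuous_on_sin_over [continuous_intros]: "continuous_on S (sin_over r)"
  using DERIV_continuous_on[OF has_field_derivative_at_within[OF sin_over_has_real_derivative]] .

lemma abs_sin_over_le: "\<bar>sin_over r \<eta>\<bar> \<le> \<bar>\<eta>\<bar>"
proof (cases "r = 0")
  case False
  have "\<bar>sin (\<eta> * r)\<bar> \<le> \<bar>\<eta> * r\<bar>"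
    by (rule abs_sin_x_le_abs_x)
  with False show ?thesis
    by (simp add: sin_over_def abs_mult divide_simps)
qed (simp add: sin_over_def)

lemma denom_pos: "0 < denom \<eta>"
  by (simp add: denom_def add_pos_nonneg)

lemma denom_nonzero [simp]: "denom \<eta> \<noteq> 0"
  using denom_pos[of \<eta>] by linarith

lemma denom_has_real_derivative: "(denom has_real_derivative 4 * \<eta>) (at \<eta>)"
  unfolding denom_def[abs_def] by (auto intro!: derivative_eq_intros)

lemma continuous_on_denom [continuous_intros]: "continuous_on S denom"
  using DERIV_continuous_on[OF has_field_derivative_at_within[OF denom_has_real_derivative]] .

lemma calR0_eq: "calR0 \<eta> r = \<i> * of_real (sin_over r \<eta> / (2 * pi * denom \<eta>))"
proof (cases "r = 0")
  case False
  have "exp (\<i> * of_real (\<eta> * r)) - exp (- \<i> * of_real (\<eta> * r)) = 2 * \<i> * of_real (sin (\<eta> * r))"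
    by (simp add: complex_eq_iff Re_exp Im_exp)
  with False show ?thesis
    by (simp add: calR0_def sin_over_def denom_def field_simps)
qed (simp add: calR0_def sin_over_def denom_def field_simps)

lemma osc_integrand_eq:
  "osc_integrand t r \<eta> = \<i> / of_real pi * cis (- phase t 0 \<eta>) * of_real (\<eta> * sin_over r \<eta>)"
proof -
  have "4 * \<eta> ^ 3 + 2 * \<eta> = 2 * \<eta> * denom \<eta>"
    by (simp add: denom_def algebra_simps power3_eq_cube power2_eq_square)
  then show ?thesis
    by (simp add: osc_integrand_def calR0_eq phase_def cis_conv_exp field_simps)
qed

lemma continuous_on_osc_integrand: "continuous_on S (osc_integrand t r)"
  unfolding osc_integrand_eq[abs_def] phase_def by (intro continuous_intros)

definition amplitude :: "real \<Rightarrow> real \<Rightarrow> real" where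
  "amplitude r \<eta> = sin_over r \<eta> / denom \<eta>"

definition amplitude_correction :: "real \<Rightarrow> real \<Rightarrow> real" where
  "amplitude_correction r \<eta> = 4 * \<eta> * sin_over r \<eta> / denom \<eta> ^ 2"

lemma amplitude_has_real_derivative:
  "(amplitude r has_real_derivative cos (\<eta> * r) / denom \<eta> - amplitude_correction r \<eta>) (at \<eta>)"
proof -
  have "((\<lambda>\<eta>. sin_over r \<eta> / denom \<eta>) has_real_derivative
      (cos (\<eta> * r) * denom \<eta> - sin_over r \<eta> * (4 * \<eta>)) / (denom \<eta> * denom \<eta>)) (at \<eta>)"
    by (rule DERIV_divide[OF sin_over_has_real_derivative denom_has_real_derivative]) simp
  then show ?thesis
    by (simp add: amplitude_def[abs_def] amplitude_correction_def power2_eq_square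
        diff_divide_distrib ac_simps)
qed

lemma abs_amplitude_le: "0 \<le> \<eta> \<Longrightarrow> \<bar>amplitude r \<eta>\<bar> \<le> \<eta> / denom \<eta>"
  using abs_sin_over_le[of r \<eta>] denom_pos[of \<eta>]
  by (simp add: amplitude_def abs_div divide_right_mono)

lemma abs_amplitude_correction_le: "\<bar>amplitude_correction r \<eta>\<bar> \<le> 2 / denom \<eta>"
proof -
  have "\<bar>4 * \<eta> * sin_over r \<eta>\<bar> \<le> 4 * \<eta>\<^sup>2"
    using mult_left_mono[OF abs_sin_over_le[of r \<eta>], of "4 * \<bar>\<eta>\<bar>"]
    by (simp add: abs_mult power2_eq_square)
  also have "\<dots> \<le> 2 * denom \<eta>"
    by (simp add: denom_def)
  finally show ?thesis
    using denom_pos[of \<eta>]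
    by (simp add: amplitude_correction_def abs_div power2_eq_square field_simps)
qed

definition ibp_boundary :: "real \<Rightarrow> real \<Rightarrow> real \<Rightarrow> complex" where
  "ibp_boundary t r \<eta> = cis (- phase t 0 \<eta>) * of_real (amplitude r \<eta>)"

definition ibp_remainder :: "real \<Rightarrow> real \<Rightarrow> real \<Rightarrow> complex" where
  "ibp_remainder t r \<eta> =
     cis (- phase t 0 \<eta>) * of_real (cos (\<eta> * r) / denom \<eta> - amplitude_correction r \<eta>)"

lemma continuous_on_ibp_remainder: "continuous_on S (ibp_remainder t r)"
  unfolding ibp_remainder_def[abs_def] amplitude_correction_def[abs_def] phase_def
  by (intro continuous_intros) auto

lemma ibp_boundary_has_vector_derivative:
  "(ibp_boundary t r has_vector_derivative
     ibp_remainder t r \<eta> - of_real (2 * pi * t) * osc_integrand t r \<eta>) (at \<eta> within S)"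
proof -
  have phase': "((\<lambda>\<eta>. - phase t 0 \<eta>) has_real_derivative - (t * (2 * \<eta> * denom \<eta>))) (at \<eta> within S)"
    by (auto intro!: derivative_eq_intros
        simp: phase_def[abs_def] denom_def algebra_simps power2_eq_square power3_eq_cube)
  have "(ibp_boundary t r has_vector_derivative
      cis (- phase t 0 \<eta>) * of_real (cos (\<eta> * r) / denom \<eta> - amplitude_correction r \<eta>)
      + \<i> * of_real (- (t * (2 * \<eta> * denom \<eta>))) * cis (- phase t 0 \<eta>) * of_real (amplitude r \<eta>))
      (at \<eta> within S)"
    unfolding ibp_boundary_def[abs_def]
    by (intro has_vector_derivative_mult has_vector_derivative_cis[OF phase'] has_vector_derivative_of_real
        has_field_derivative_at_within[OF amplitude_has_real_derivative])
  then show ?thesis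
    by (simp add: ibp_remainder_def osc_integrand_eq amplitude_def field_simps)
qed

lemma integral_osc_integrand_by_parts:
  assumes "t \<noteq> 0" and "a \<le> b"
  shows "integral {a..b} (osc_integrand t r)
    = (integral {a..b} (ibp_remainder t r) - (ibp_boundary t r b - ibp_boundary t r a)) / of_real (2 * pi * t)"
proof -
  have "((\<lambda>\<eta>. ibp_remainder t r \<eta> - of_real (2 * pi * t) * osc_integrand t r \<eta>) has_integral
      ibp_boundary t r b - ibp_boundary t r a) {a..b}"
    by (rule fundamental_theorem_of_calculus[OF \<open>a \<le> b\<close> ibp_boundary_has_vector_derivative])
  moreover have "integral {a..b} (\<lambda>\<eta>. ibp_remainder t r \<eta> - of_real (2 * pi * t) * osc_integrand t r \<eta>)
      = integral {a..b} (ibp_remainder t r) - of_real (2 * pi * t) * integral {a..b} (osc_integrand t r)"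
    using integrable_continuous_interval[OF continuous_on_ibp_remainder]
      integrable_on_mult_right[OF integrable_continuous_interval[OF continuous_on_osc_integrand]]
    by (subst integral_diff) auto
  ultimately show ?thesis
    using \<open>t \<noteq> 0\<close> by (simp add: integral_unique field_simps)
qed

lemma ibp_remainder_eq:
  "ibp_remainder t r \<eta> =
     cis (- phase t (- r) \<eta>) * of_real (1 / denom \<eta>) / 2 + cis (- phase t r \<eta>) * of_real (1 / denom \<eta>) / 2
     - cis (- phase t 0 \<eta>) * of_real (amplitude_correction r \<eta>)"
proof -
  have cis_phase: "cis (- phase t (- r) \<eta>) = cis (- phase t 0 \<eta>) * cis (\<eta> * r)"
    "cis (- phase t r \<eta>) = cis (- phase t 0 \<eta>) * cis (- (\<eta> * r))"
    by (simp_all add: cis_mult phase_def algebra_simps)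
  have cos: "of_real (cos (\<eta> * r)) = (cis (\<eta> * r) + cis (- (\<eta> * r))) / 2"
    by (simp add: complex_eq_iff)
  have "ibp_remainder t r \<eta> = cis (- phase t 0 \<eta>)
      * (of_real (cos (\<eta> * r)) * of_real (1 / denom \<eta>) - of_real (amplitude_correction r \<eta>))"
    by (simp add: ibp_remainder_def)
  also have "\<dots> = cis (- phase t (- r) \<eta>) * of_real (1 / denom \<eta>) / 2
      + cis (- phase t r \<eta>) * of_real (1 / denom \<eta>) / 2
      - cis (- phase t 0 \<eta>) * of_real (amplitude_correction r \<eta>)"
    unfolding cos cis_phase by (simp add: algebra_simps add_divide_distrib)
  finally show ?thesis .
qed

lemma inverse_denom_has_real_derivative:
  "((\<lambda>\<eta>. 1 / denom \<eta>) has_real_derivative - (4 * \<eta> / denom \<eta> ^ 2)) (at \<eta>)"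
  using DERIV_inverse_fun[OF denom_has_real_derivative denom_nonzero]
  by (simp add: divide_inverse power2_eq_square)

lemma has_integral_denom_weight:
  assumes "a \<le> b"
  shows "((\<lambda>\<eta>. 4 * \<eta> / denom \<eta> ^ 2) has_integral 1 / denom a - 1 / denom b) {a..b}"
  using fundamental_theorem_of_calculus[OF assms, of "\<lambda>\<eta>. - (1 / denom \<eta>)"]
    DERIV_minus[OF inverse_denom_has_real_derivative]
  by (simp add: has_real_derivative_iff_has_vector_derivative has_vector_derivative_at_within)

lemma norm_integral_cis_phase_le:
  fixes h h' :: "real \<Rightarrow> real"
  assumes "t > 0" and "0 \<le> a" and "a \<le> b"
    and h: "\<And>x. (h has_real_derivative h' x) (at x)"
    and h'_le: "\<And>x. x \<in> {a..b} \<Longrightarrow> \<bar>h' x\<bar> \<le> k * (4 * x / denom x ^ 2)"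
    and h_end: "\<bar>h b\<bar> \<le> k / denom b"
  shows "norm (integral {a..b} (\<lambda>x. cis (- phase t s x) * of_real (h x)))
    \<le> 10 / sqrt (2 * t * denom a) * (k / denom a)"
proof -
  define L where "L = 2 * t * denom a"
  have "L > 0"
    using \<open>t > 0\<close> denom_pos[of a] by (simp add: L_def)
  have weight: "((\<lambda>x. k * (4 * x / denom x ^ 2)) has_integral k * (1 / denom a - 1 / denom b)) {a..b}"
    using has_integral_mult_right[OF has_integral_denom_weight[OF \<open>a \<le> b\<close>]] .
  have "norm (integral {a..b} (\<lambda>x. cis (phase t s x) * of_real (h x)))
      \<le> 10 / sqrt L * (\<bar>h b\<bar> + k * (1 / denom a - 1 / denom b))"
  proof (rule van_der_corput_second_derivative_amplitude[OF \<open>a \<le> b\<close> \<open>L > 0\<close> _ _ _ h h'_le,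
        unfolded integral_unique[OF weight]])
    show "(phase t s has_real_derivative t * (4 * x ^ 3 + 2 * x) + s) (at x)" for x
      by (auto intro!: derivative_eq_intros simp: phase_def[abs_def] algebra_simps)
    show "((\<lambda>x. t * (4 * x ^ 3 + 2 * x) + s) has_real_derivative t * (12 * x\<^sup>2 + 2)) (at x)" for x
      by (auto intro!: derivative_eq_intros simp: algebra_simps)
    show "L \<le> t * (12 * x\<^sup>2 + 2)" if "x \<in> {a..b}" for x
    proof -
      have "a\<^sup>2 \<le> x\<^sup>2"
        using that \<open>0 \<le> a\<close> by (intro power_mono) auto
      then have "a\<^sup>2 \<le> 3 * x\<^sup>2"
        using zero_le_power2[of x] by linarith
      then show ?thesis
        using \<open>t > 0\<close> by (simp add: L_def denom_def)
    qed
  qed (use has_integral_integrable[OF weight] in auto)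
  also have "\<dots> \<le> 10 / sqrt L * (k / denom a)"
    using h_end \<open>L > 0\<close> by (intro mult_left_mono) (auto simp: right_diff_distrib)
  finally have "norm (integral {a..b} (\<lambda>x. cis (phase t s x) * of_real (h x)))
      \<le> 10 / sqrt L * (k / denom a)" .
  moreover have "integral {a..b} (\<lambda>x. cis (- phase t s x) * of_real (h x))
      = cnj (integral {a..b} (\<lambda>x. cis (phase t s x) * of_real (h x)))"
    by (simp add: integral_cnj cis_cnj)
  ultimately show ?thesis
    by (simp add: L_def)
qed

lemma amplitude_correction_derivative:
  obtains h' where "\<And>\<eta>. (amplitude_correction r has_real_derivative h' \<eta>) (at \<eta>)"
    and "\<And>\<eta>. 0 \<le> \<eta> \<Longrightarrow> \<bar>h' \<eta>\<bar> \<le> 6 * (4 * \<eta> / denom \<eta> ^ 2)"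
proof
  fix \<eta> :: real
  let ?s = "sin_over r \<eta>" and ?D = "denom \<eta>"
  have "((\<lambda>\<eta>. 4 * \<eta> * sin_over r \<eta> / denom \<eta> ^ 2) has_real_derivative
      ((4 * ?s + 4 * \<eta> * cos (\<eta> * r)) * ?D ^ 2 - 4 * \<eta> * ?s * (2 * ?D * (4 * \<eta>))) / (?D ^ 2 * ?D ^ 2))
      (at \<eta>)"
    by (rule DERIV_divide) (auto intro!: derivative_eq_intros sin_over_has_real_derivative
        denom_has_real_derivative simp: algebra_simps)
  moreover have "((4 * ?s + 4 * \<eta> * cos (\<eta> * r)) * ?D ^ 2 - 4 * \<eta> * ?s * (2 * ?D * (4 * \<eta>))) / (?D ^ 2 * ?D ^ 2)
      = (4 * ?s + 4 * \<eta> * cos (\<eta> * r)) / ?D ^ 2 - 32 * \<eta>\<^sup>2 * ?s / ?D ^ 3"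
    by (simp add: field_simps power2_eq_square power3_eq_cube)
  ultimately show "(amplitude_correction r has_real_derivative
      (4 * ?s + 4 * \<eta> * cos (\<eta> * r)) / ?D ^ 2 - 32 * \<eta>\<^sup>2 * ?s / ?D ^ 3) (at \<eta>)"
    by (simp add: amplitude_correction_def[abs_def])
  assume "0 \<le> \<eta>"
  have s: "\<bar>?s\<bar> \<le> \<eta>"
    using abs_sin_over_le[of r \<eta>] \<open>0 \<le> \<eta>\<close> by simp
  have "\<bar>4 * \<eta> * cos (\<eta> * r)\<bar> \<le> 4 * \<eta>"
    using \<open>0 \<le> \<eta>\<close> by (simp add: abs_mult mult_left_le)
  then have first: "\<bar>(4 * ?s + 4 * \<eta> * cos (\<eta> * r)) / ?D ^ 2\<bar> \<le> 8 * \<eta> / ?D ^ 2"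
    using s by (simp add: abs_div divide_right_mono)
  have second: "\<bar>32 * \<eta>\<^sup>2 * ?s / ?D ^ 3\<bar> \<le> 16 * \<eta> / ?D ^ 2"
  proof -
    have "\<bar>32 * \<eta>\<^sup>2 * ?s\<bar> \<le> 16 * \<eta> * (2 * \<eta>\<^sup>2)"
      using mult_left_mono[OF s, of "32 * \<eta>\<^sup>2"] by (simp add: abs_mult power2_eq_square algebra_simps)
    also have "\<dots> \<le> 16 * \<eta> * ?D"
      using \<open>0 \<le> \<eta>\<close> by (intro mult_left_mono) (auto simp: denom_def)
    finally show ?thesis
      using denom_pos[of \<eta>]
      by (simp add: abs_div divide_le_eq power3_eq_cube power2_eq_square field_simps)
  qed
  have "8 * \<eta> / ?D ^ 2 + 16 * \<eta> / ?D ^ 2 = 6 * (4 * \<eta> / ?D ^ 2)"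
    by (simp add: field_simps)
  with order_trans[OF abs_triangle_ineq4 add_mono[OF first second]]
  show "\<bar>(4 * ?s + 4 * \<eta> * cos (\<eta> * r)) / ?D ^ 2 - 32 * \<eta>\<^sup>2 * ?s / ?D ^ 3\<bar>
      \<le> 6 * (4 * \<eta> / ?D ^ 2)"
    by simp
qed

lemma norm_integral_ibp_remainder_le:
  assumes "t > 0" and "0 \<le> a" and "a \<le> b"
  shows "norm (integral {a..b} (ibp_remainder t r)) \<le> 70 / sqrt (2 * t * denom a) / denom a"
proof -
  define M where "M = 10 / sqrt (2 * t * denom a)"
  define A where "A s x = cis (- phase t s x) * of_real (1 / denom x)" for s x
  define C where "C x = cis (- phase t 0 x) * of_real (amplitude_correction r x)" for x
  have A: "norm (integral {a..b} (A s)) \<le> M * (1 / denom a)" for s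
    unfolding M_def A_def
    by (rule norm_integral_cis_phase_le[OF assms inverse_denom_has_real_derivative])
      (use \<open>0 \<le> a\<close> in \<open>auto simp: abs_of_pos denom_pos\<close>)
  obtain h' where h': "\<And>x. (amplitude_correction r has_real_derivative h' x) (at x)"
    and h'_le: "\<And>x. 0 \<le> x \<Longrightarrow> \<bar>h' x\<bar> \<le> 6 * (4 * x / denom x ^ 2)"
    using amplitude_correction_derivative by blast
  have "\<bar>amplitude_correction r b\<bar> \<le> 6 / denom b"
    using abs_amplitude_correction_le[of r b] divide_right_mono[of 2 6 "denom b"] denom_pos[of b]
    by linarith
  then have C: "norm (integral {a..b} C) \<le> M * (6 / denom a)"
    unfolding M_def C_def
    by (intro norm_integral_cis_phase_le[OF assms h']) (use \<open>0 \<le> a\<close> h'_le in auto)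
  have "A s integrable_on {a..b}" "C integrable_on {a..b}" for s
    unfolding A_def[abs_def] C_def[abs_def] amplitude_correction_def[abs_def] phase_def
    by (auto intro!: integrable_continuous_interval continuous_intros)
  then have "integral {a..b} (ibp_remainder t r)
      = integral {a..b} (A (- r)) / 2 + integral {a..b} (A r) / 2 - integral {a..b} C"
    unfolding ibp_remainder_eq[abs_def] A_def[symmetric] C_def[symmetric]
    by (simp add: integral_diff integral_add integrable_add)
  also have "norm \<dots> \<le> M * (1 / denom a) / 2 + M * (1 / denom a) / 2 + M * (6 / denom a)"
    using A[of "- r"] A[of r] C
    by (intro norm_triangle_le_diff norm_triangle_le add_mono) (auto simp: norm_divide)
  finally show ?thesis
    by (simp add: M_def ac_simps)
qed

section \<open>The improper integral and its decay\<close>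

lemma tendsto_integral_at_top_if_dominated:
  fixes f :: "real \<Rightarrow> 'a::euclidean_space"
  assumes "continuous_on {a..} f" and "g integrable_on {a..}"
    and "\<And>x. a \<le> x \<Longrightarrow> norm (f x) \<le> g x"
  shows "\<exists>L. ((\<lambda>R. integral {a..R} f) \<longlongrightarrow> L) at_top"
proof -
  have "f absolutely_integrable_on {a..}"
    by (rule measurable_bounded_by_integrable_imp_absolutely_integrable[OF _ _ assms(2)])
      (use assms in \<open>auto intro: continuous_imp_measurable_on_sets_lebesgue\<close>)
  then have "((\<lambda>R. set_lebesgue_integral lebesgue {a..R} f) \<longlongrightarrow> set_lebesgue_integral lebesgue {a..} f) at_top"
    by (intro tendsto_set_lebesgue_integral_at_top) auto
  moreover have "set_lebesgue_integral lebesgue {a..R} f = integral {a..R} f" for R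
    by (rule set_lebesgue_integral_eq_integral(2), rule set_integrable_subset)
      (use \<open>f absolutely_integrable_on {a..}\<close> in auto)
  ultimately show ?thesis
    by auto
qed

lemma integrable_inverse_square_shifted: "(\<lambda>x::real. 1 / (1 + x)\<^sup>2) integrable_on {0..}"
proof -
  have primitive: "((\<lambda>x. 1 / (1 + x)\<^sup>2) has_integral 1 - 1 / (1 + y)) {0..y}" if "0 \<le> y" for y :: real
  proof -
    have "((\<lambda>x. - 1 / (1 + x)) has_vector_derivative 1 / (1 + x)\<^sup>2) (at x within {0..y})"
      if "x \<in> {0..y}" for x
      using that by (auto intro!: derivative_eq_intros simp: power2_eq_square
          simp flip: has_real_derivative_iff_has_vector_derivative)
    from fundamental_theorem_of_calculus[OF \<open>0 \<le> y\<close> this] show ?thesis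
      by simp
  qed
  have "((\<lambda>x::real. 1 / (1 + x)\<^sup>2) has_integral 1) {0..}"
  proof (rule has_integral_to_inf)
    show "(\<lambda>x. 1 / (1 + x)\<^sup>2) integrable_on {0..y}" for y :: real
      by (cases "0 \<le> y") (use primitive in auto)
    have "((\<lambda>y::real. 1 - 1 / (1 + y)) \<longlongrightarrow> 1) at_top"
      by real_asymp
    moreover have "\<forall>\<^sub>F y in at_top. 1 - 1 / (1 + y) = integral {0..y} (\<lambda>x::real. 1 / (1 + x)\<^sup>2)"
      using eventually_ge_at_top[of "0::real"]
      by eventually_elim (rule integral_unique[OF primitive, symmetric])
    ultimately show "((\<lambda>y. integral {0..y} (\<lambda>x::real. 1 / (1 + x)\<^sup>2)) \<longlongrightarrow> 1) at_top"
      by (rule Lim_transform_eventually)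
  qed simp
  then show ?thesis
    by (rule has_integral_integrable)
qed

lemma norm_ibp_remainder_le:
  assumes "0 \<le> \<eta>"
  shows "norm (ibp_remainder t r \<eta>) \<le> 6 / (1 + \<eta>)\<^sup>2"
proof -
  have "norm (ibp_remainder t r \<eta>) = \<bar>cos (\<eta> * r) / denom \<eta> - amplitude_correction r \<eta>\<bar>"
    by (simp only: ibp_remainder_def norm_mult norm_cis norm_of_real mult_1_left)
  also have "\<dots> \<le> \<bar>cos (\<eta> * r) / denom \<eta>\<bar> + \<bar>amplitude_correction r \<eta>\<bar>"
    by (rule abs_triangle_ineq4)
  also have "\<dots> \<le> 1 / denom \<eta> + 2 / denom \<eta>"
    using divide_right_mono[OF abs_cos_le_one[of "\<eta> * r"], of "denom \<eta>"] denom_pos[of \<eta>]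
      abs_amplitude_correction_le[of r \<eta>]
    by (intro add_mono) (simp_all add: abs_div)
  also have "\<dots> = 6 / (2 * denom \<eta>)"
    by simp
  also have "\<dots> \<le> 6 / (1 + \<eta>)\<^sup>2"
  proof (rule divide_left_mono)
    have "2 * denom \<eta> - (1 + \<eta>)\<^sup>2 = (\<eta> - 1)\<^sup>2 + 2 * \<eta>\<^sup>2"
      by (simp add: denom_def power2_eq_square algebra_simps)
    then show "(1 + \<eta>)\<^sup>2 \<le> 2 * denom \<eta>"
      using zero_le_power2[of "\<eta> - 1"] zero_le_power2[of \<eta>] by linarith
  qed (use \<open>0 \<le> \<eta>\<close> denom_pos[of \<eta>] in \<open>auto intro!: mult_pos_pos\<close>)
  finally show ?thesis .
qed

lemma ibp_remainder_integral_converges: "\<exists>K. ((\<lambda>R. integral {0..R} (ibp_remainder t r)) \<longlongrightarrow> K) at_top"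
  by (rule tendsto_integral_at_top_if_dominated[OF continuous_on_ibp_remainder
        integrable_on_mult_right[OF integrable_inverse_square_shifted, of 6]])
    (use norm_ibp_remainder_le in auto)

lemma ibp_boundary_tendsto_0: "(ibp_boundary t r \<longlongrightarrow> 0) at_top"
proof (rule Lim_null_comparison)
  show "\<forall>\<^sub>F R in at_top. norm (ibp_boundary t r R) \<le> R / denom R"
    using eventually_ge_at_top[of "0::real"]
    by eventually_elim (simp add: ibp_boundary_def norm_mult abs_amplitude_le)
  show "((\<lambda>R. R / denom R) \<longlongrightarrow> 0) at_top"
    unfolding denom_def by real_asymp
qed

lemma integral_osc_integrand_converges:
  assumes "t \<noteq> 0"
  shows "\<exists>I. ((\<lambda>R. integral {0..R} (osc_integrand t r)) \<longlongrightarrow> I) at_top"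
proof -
  obtain K where K: "((\<lambda>R. integral {0..R} (ibp_remainder t r)) \<longlongrightarrow> K) at_top"
    using ibp_remainder_integral_converges by blast
  have "((\<lambda>R. (integral {0..R} (ibp_remainder t r) - ibp_boundary t r R) / of_real (2 * pi * t))
      \<longlongrightarrow> (K - 0) / of_real (2 * pi * t)) at_top"
    by (intro tendsto_intros K ibp_boundary_tendsto_0) (use assms in simp)
  moreover have "\<forall>\<^sub>F R in at_top. (integral {0..R} (ibp_remainder t r) - ibp_boundary t r R) / of_real (2 * pi * t)
      = integral {0..R} (osc_integrand t r)"
    using eventually_ge_at_top[of "0::real"]
    by eventually_elim
      (simp add: integral_osc_integrand_by_parts[OF assms] ibp_boundary_def amplitude_def sin_over_def)
  ultimately show ?thesis
    by (blast intro: Lim_transform_eventually)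
qed

definition osc_bound :: "real \<Rightarrow> real \<Rightarrow> real" where
  "osc_bound t a = a ^ 3 / pi + (a / denom a + 70 / sqrt (2 * t * denom a) / denom a) / (2 * pi * t)"

lemma norm_integral_osc_integrand_le:
  assumes "t > 0" and "0 \<le> a" and "a \<le> R"
  shows "norm (integral {0..R} (osc_integrand t r)) \<le> osc_bound t a + norm (ibp_boundary t r R) / (2 * pi * t)"
proof -
  have t_ne_0: "t \<noteq> 0" and norm_2pit: "norm (complex_of_real (2 * pi * t)) = 2 * pi * t"
    using \<open>t > 0\<close> unfolding norm_of_real by auto
  have "norm (osc_integrand t r \<eta>) \<le> a\<^sup>2 / pi" if "\<eta> \<in> {0..a}" for \<eta>
  proof -
    have "\<bar>\<eta> * sin_over r \<eta>\<bar> \<le> a\<^sup>2"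
      using that abs_sin_over_le[of r \<eta>] mult_mono[of \<eta> a "\<bar>sin_over r \<eta>\<bar>" a]
      by (auto simp: abs_mult power2_eq_square)
    then show ?thesis
      by (simp add: osc_integrand_eq norm_mult norm_divide divide_right_mono)
  qed
  from integral_bound[OF \<open>0 \<le> a\<close> continuous_on_osc_integrand this]
  have near_0: "norm (integral {0..a} (osc_integrand t r)) \<le> a ^ 3 / pi"
    by (simp add: power2_eq_square power3_eq_cube)
  have "norm (integral {a..R} (ibp_remainder t r) - (ibp_boundary t r R - ibp_boundary t r a))
      \<le> norm (integral {a..R} (ibp_remainder t r)) + (norm (ibp_boundary t r R) + norm (ibp_boundary t r a))"
    by (rule order_trans[OF norm_triangle_ineq4]) (simp add: norm_triangle_ineq4)
  also have "\<dots> \<le> 70 / sqrt (2 * t * denom a) / denom a + (norm (ibp_boundary t r R) + a / denom a)"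
    using norm_integral_ibp_remainder_le[OF assms, of r] abs_amplitude_le[OF \<open>0 \<le> a\<close>, of r]
    by (simp add: ibp_boundary_def norm_mult)
  finally have "norm (integral {a..R} (osc_integrand t r))
      \<le> (70 / sqrt (2 * t * denom a) / denom a + (norm (ibp_boundary t r R) + a / denom a)) / (2 * pi * t)"
    unfolding integral_osc_integrand_by_parts[OF t_ne_0 \<open>a \<le> R\<close>] norm_divide norm_2pit
    by (rule divide_right_mono) (use \<open>t > 0\<close> in simp)
  then have away_from_0: "norm (integral {a..R} (osc_integrand t r))
      \<le> (a / denom a + 70 / sqrt (2 * t * denom a) / denom a) / (2 * pi * t) + norm (ibp_boundary t r R) / (2 * pi * t)"
    by (simp add: add_divide_distrib)
  have split: "integral {0..R} (osc_integrand t r)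
      = integral {0..a} (osc_integrand t r) + integral {a..R} (osc_integrand t r)"
    using assms by (intro Henstock_Kurzweil_Integration.integral_combine[symmetric]
        integrable_continuous_interval continuous_on_osc_integrand) auto
  show ?thesis
    unfolding split osc_bound_def
    using near_0 away_from_0
      norm_triangle_ineq[of "integral {0..a} (osc_integrand t r)" "integral {a..R} (osc_integrand t r)"]
    by linarith
qed

lemma osc_integral_converges_bounded:
  assumes "t > 0" and "0 \<le> a"
  shows "\<exists>I. ((\<lambda>R. integral {0..R} (osc_integrand t r)) \<longlongrightarrow> I) at_top \<and> norm I \<le> osc_bound t a"
proof -
  obtain I where lim: "((\<lambda>R. integral {0..R} (osc_integrand t r)) \<longlongrightarrow> I) at_top"
    using integral_osc_integrand_converges[of t r] \<open>t > 0\<close> by auto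
  have "((\<lambda>R. osc_bound t a + norm (ibp_boundary t r R) / (2 * pi * t))
      \<longlongrightarrow> osc_bound t a + norm (0::complex) / (2 * pi * t)) at_top"
    by (intro tendsto_intros ibp_boundary_tendsto_0) (use \<open>t > 0\<close> in simp)
  moreover have "\<forall>\<^sub>F R in at_top.
      norm (integral {0..R} (osc_integrand t r)) \<le> osc_bound t a + norm (ibp_boundary t r R) / (2 * pi * t)"
    using eventually_ge_at_top[of a]
    by eventually_elim (rule norm_integral_osc_integrand_le[OF assms])
  ultimately have "norm I \<le> osc_bound t a"
    using tendsto_le[OF trivial_limit_at_top_linorder _ tendsto_norm[OF lim]] by simp
  with lim show ?thesis
    by blast
qed

lemma osc_bound_0_le:
  assumes "t > 0"
  shows "osc_bound t 0 \<le> 12 * t powr (-3/2)"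
proof -
  have "t powr (3/2) = t * sqrt t"
    using powr_add[of t 1 "1/2"] \<open>t > 0\<close> by (simp add: powr_half_sqrt)
  moreover have "(-3/2::real) = - (3/2)"
    by simp
  ultimately have powr: "t powr (-3/2) = inverse (t * sqrt t)"
    by (simp only: powr_minus)
  have "osc_bound t 0 = 70 / (2 * pi * t * sqrt (2 * t))"
    by (simp add: osc_bound_def denom_def divide_divide_eq_left ac_simps)
  also have "\<dots> \<le> 70 / (6 * t * sqrt t)"
  proof (rule divide_left_mono)
    have "6 * t \<le> 2 * pi * t"
      using mult_right_mono[of 6 "2 * pi" t] pi_gt3 \<open>t > 0\<close> by simp
    then show "6 * t * sqrt t \<le> 2 * pi * t * sqrt (2 * t)"
      using \<open>t > 0\<close> by (intro mult_mono) auto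
  qed (use \<open>t > 0\<close> in auto)
  also have "\<dots> \<le> 12 * inverse (t * sqrt t)"
    using \<open>t > 0\<close> by (simp add: field_simps)
  finally show ?thesis
    unfolding powr .
qed

lemma osc_bound_le:
  assumes "t > 0" and "a > 0"
  shows "osc_bound t a \<le> a ^ 3 + 1 / (t * a) + 3 / (a ^ 3 * t * sqrt t)"
proof -
  have D: "2 * a\<^sup>2 \<le> denom a" "0 < denom a"
    by (simp add: denom_def) (rule denom_pos)
  have "a ^ 3 / pi \<le> a ^ 3"
    using pi_gt3 \<open>a > 0\<close> by (simp add: divide_le_eq mult_le_cancel_right1 less_imp_le)
  moreover have "a / denom a / (2 * pi * t) \<le> 1 / (t * a)"
  proof -
    have "a * a \<le> denom a"
      using D(1) zero_le_square[of a] unfolding power2_eq_square by linarith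
    then have "t * (a * a) \<le> (2 * pi * t) * denom a"
      using pi_gt3 \<open>t > 0\<close> by (intro mult_mono) auto
    then show ?thesis
      using \<open>t > 0\<close> \<open>a > 0\<close> D(2) by (simp add: field_simps)
  qed
  moreover have "70 / sqrt (2 * t * denom a) / denom a / (2 * pi * t) \<le> 3 / (a ^ 3 * t * sqrt t)"
  proof -
    define X where "X = a ^ 3 * t * sqrt t"
    define Y where "Y = sqrt (2 * t * denom a) * denom a * (2 * pi * t)"
    have "sqrt ((2 * a * sqrt t)\<^sup>2) \<le> sqrt (2 * t * denom a)"
      using D \<open>t > 0\<close> by (intro real_sqrt_le_mono) (simp add: power2_eq_square)
    then have "2 * a * sqrt t \<le> sqrt (2 * t * denom a)"
      using \<open>t > 0\<close> \<open>a > 0\<close> by simp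
    then have "2 * a * sqrt t * (2 * a\<^sup>2) * (6 * t) \<le> Y"
      unfolding Y_def using D pi_gt3 \<open>t > 0\<close> \<open>a > 0\<close> by (intro mult_mono) auto
    then have "24 * X \<le> Y"
      by (simp add: X_def power2_eq_square power3_eq_cube algebra_simps)
    moreover have "X > 0"
      using \<open>t > 0\<close> \<open>a > 0\<close> by (simp add: X_def)
    ultimately have "70 / Y \<le> 3 / X"
      by (simp add: field_simps)
    then show ?thesis
      by (simp add: X_def Y_def)
  qed
  ultimately show ?thesis
    unfolding osc_bound_def add_divide_distrib by linarith
qed

lemma osc_bound_quarter_le:
  assumes "t > 0"
  shows "osc_bound t (t powr (-1/4)) \<le> 5 * t powr (-3/4)"
proof -
  define u where "u = t powr (1/4)"
  have "u > 0"
    using \<open>t > 0\<close> by (simp add: u_def)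
  have power: "t powr (k / 4) = u ^ k" for k :: nat
    using \<open>t > 0\<close> by (simp add: u_def powr_realpow[symmetric] powr_powr)
  have t: "t = u ^ 4"
    using power[of 4] \<open>t > 0\<close> by simp
  have sqrt_t: "sqrt t = u\<^sup>2"
    using power[of 2] \<open>t > 0\<close> by (simp add: powr_half_sqrt)
  have "t powr (-1/4) = 1 / u" "t powr (-3/4) = 1 / u ^ 3"
    using power[of 1] power[of 3] by (simp_all add: powr_minus_divide)
  moreover have "osc_bound t (1 / u) \<le> (1 / u) ^ 3 + 1 / (t * (1 / u)) + 3 / ((1 / u) ^ 3 * t * sqrt t)"
    using \<open>u > 0\<close> by (intro osc_bound_le \<open>t > 0\<close>) simp
  moreover have "\<dots> = 5 * (1 / u ^ 3)"
    unfolding sqrt_t unfolding t using \<open>u > 0\<close> by (simp add: field_simps power2_eq_square power3_eq_cube power4_eq_xxxx)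
  ultimately show ?thesis
    by simp
qed

theorem proposition2p1:
  shows "\<exists>C::real.
    (\<forall>t::real. t > 1 \<longrightarrow> (\<forall>x y :: real^3. \<exists>I::complex.
        ((\<lambda>R. integral {0..R} (osc_integrand t (dist x y))) \<longlongrightarrow> I) at_top
        \<and> norm I \<le> C * t powr (-3/2))) \<and>
    (\<forall>t::real. 0 < t \<and> t \<le> 1 \<longrightarrow> (\<forall>x y :: real^3. \<exists>I::complex.
        ((\<lambda>R. integral {0..R} (osc_integrand t (dist x y))) \<longlongrightarrow> I) at_top
        \<and> norm I \<le> C * t powr (-3/4)))"
proof (rule exI[of _ 12], intro conjI allI impI)
  fix t :: real and x y :: "real^3"
  assume "t > 1"
  then have "t > 0"
    by simp
  have "osc_bound t 0 \<le> 12 * t powr (-3/2)"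
    using \<open>t > 0\<close> by (rule osc_bound_0_le)
  with osc_integral_converges_bounded[OF \<open>t > 0\<close> order_refl, of "dist x y"]
  show "\<exists>I. ((\<lambda>R. integral {0..R} (osc_integrand t (dist x y))) \<longlongrightarrow> I) at_top
      \<and> norm I \<le> 12 * t powr (-3/2)"
    by (meson order_trans)
next
  fix t :: real and x y :: "real^3"
  assume "0 < t \<and> t \<le> 1"
  then have "t > 0"
    by simp
  have "osc_bound t (t powr (-1/4)) \<le> 12 * t powr (-3/4)"
    using osc_bound_quarter_le[OF \<open>t > 0\<close>] powr_ge_zero[of t "-3/4"] by linarith
  with osc_integral_converges_bounded[OF \<open>t > 0\<close> powr_ge_zero[of t "-1/4"], of "dist x y"]
  show "\<exists>I. ((\<lambda>R. integral {0..R} (osc_integrand t (dist x y))) \<longlongrightarrow> I) at_top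
      \<and> norm I \<le> 12 * t powr (-3/4)"
    by (meson order_trans)
qed

end
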